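(* Let $n\ge 1$ and let $p$ be any probability distribution on $\{0,1\}^n$ with support $\operatorname{supp}(p)=\{v: p(v)>0\}$. Let $k$ be the minimal number of pairs $\{u,u'\}\subseteq\{0,1\}^n$, where in each pair the vectors $u,u'$ differ in exactly one entry, such that $\operatorname{supp}(p)$ is contained in the union of these pairs. Then $p$ can be approximated arbitrarily well by the visible marginal distribution of an RBM with $n$ visible units and $k-1$ hidden units; that is, for every $\varepsilon>0$ there exist parameters $W,B,C$ of such an RBM whose visible marginal $q$ satisfies $D(p\,\|\,q)<\varepsilon$.
   Context: A Restricted Boltzmann Machine (RBM) with $n$ visible units and $m$ hidden units has parameters $W\in\mathbb{R}^{m\times n}$, $B\in\mathbb{R}^n$, $C\in\mathbb{R}^m$, and defines the joint distribution $p(v,h)=\frac{1}{Z}\exp(h^T W v + B\cdot v + C\cdot h)$ on $(v,h)\in\{0,1\}^n\times\{0,1\}^m$, where $Z$ is the normalizing constant; its visible marginal distribution is $q(v)=\sum_{h\in\{0,1\}^m}p(v,h)$. For $m=0$ this is $q(v)\propto\exp(B\cdot v)$. $D(p\|q)=\sum_v p(v)\log\frac{p(v)}{q(v)}$ denotes the Kullback–Leibler divergence. *)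

theory Defs
  imports Complex_Main "HOL-Library.FuncSet"
begin

definition cube :: "nat \<Rightarrow> (nat \<Rightarrow> real) set" where
  "cube n = PiE {..<n} (\<lambda>_. {0, 1})"

definition rbm_energy ::
  "nat \<Rightarrow> nat \<Rightarrow> (nat \<Rightarrow> nat \<Rightarrow> real) \<Rightarrow> (nat \<Rightarrow> real) \<Rightarrow> (nat \<Rightarrow> real)
   \<Rightarrow> (nat \<Rightarrow> real) \<Rightarrow> (nat \<Rightarrow> real) \<Rightarrow> real" where
  "rbm_energy n m W B C v h =
     (\<Sum>i<m. \<Sum>j<n. h i * W i j * v j) + (\<Sum>j<n. B j * v j) + (\<Sum>i<m. C i * h i)"

definition rbm_Z ::
  "nat \<Rightarrow> nat \<Rightarrow> (nat \<Rightarrow> nat \<Rightarrow> real) \<Rightarrow> (nat \<Rightarrow> real) \<Rightarrow> (nat \<Rightarrow> real) \<Rightarrow> real" where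
  "rbm_Z n m W B C = (\<Sum>v\<in>cube n. \<Sum>h\<in>cube m. exp (rbm_energy n m W B C v h))"

definition rbm_marginal ::
  "nat \<Rightarrow> nat \<Rightarrow> (nat \<Rightarrow> nat \<Rightarrow> real) \<Rightarrow> (nat \<Rightarrow> real) \<Rightarrow> (nat \<Rightarrow> real)
   \<Rightarrow> (nat \<Rightarrow> real) \<Rightarrow> real" where
  "rbm_marginal n m W B C v =
     (\<Sum>h\<in>cube m. exp (rbm_energy n m W B C v h)) / rbm_Z n m W B C"

definition KL :: "nat \<Rightarrow> ((nat \<Rightarrow> real) \<Rightarrow> real) \<Rightarrow> ((nat \<Rightarrow> real) \<Rightarrow> real) \<Rightarrow> real" where
  "KL n p q = (\<Sum>v\<in>cube n. if p v = 0 then 0 else p v * ln (p v / q v))"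

definition is_distribution :: "nat \<Rightarrow> ((nat \<Rightarrow> real) \<Rightarrow> real) \<Rightarrow> bool" where
  "is_distribution n p \<longleftrightarrow> (\<forall>v\<in>cube n. p v \<ge> 0) \<and> (\<Sum>v\<in>cube n. p v) = 1"

definition supp :: "nat \<Rightarrow> ((nat \<Rightarrow> real) \<Rightarrow> real) \<Rightarrow> (nat \<Rightarrow> real) set" where
  "supp n p = {v \<in> cube n. p v > 0}"

definition edge_pair :: "nat \<Rightarrow> (nat \<Rightarrow> real) set \<Rightarrow> bool" where
  "edge_pair n P \<longleftrightarrow> (\<exists>u u'. u \<in> cube n \<and> u' \<in> cube n \<and> P = {u, u'} \<and>
       card {j\<in>{..<n}. u j \<noteq> u' j} = 1)"

definition min_pair_cover :: "nat \<Rightarrow> (nat \<Rightarrow> real) set \<Rightarrow> nat" where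
  "min_pair_cover n S = (LEAST k. \<exists>F. finite F \<and> card F = k \<and>
       (\<forall>P\<in>F. edge_pair n P) \<and> S \<subseteq> \<Union>F)"

end

(*
  Fix k edges e_0, ..., e_(k-1) of the cube covering supp p and assign every support point to
  one edge containing it. For edge i there is an affine function A_i(t, v) equal to
  log p(v) - t * scale_i * (Hamming distance from v to e_i), with log 0 read as -t * scale_i,
  such that exp A_i(t, v) tends to p(v) at the points assigned to e_i and to 0 elsewhere.
  Visible biases A_0 and hidden units computing A_i - A_0 give the unnormalised marginal
  exp A_0 * prod_(i>0) (1 + exp (A_i - A_0)). With scale_0 = 1 and scale_i = n + 1 otherwise,
  every A_i - A_0 tends to -infinity unless v is assigned to e_i, so the product tends to
  sum_i exp A_i = p, and the divergence from p of the normalised marginal tends to 0.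
*)
theory Submission
  imports Defs "HOL-Real_Asymp.Real_Asymp"
begin

lemma sum_cube_exp_linear:
  fixes x :: "nat \<Rightarrow> real"
  shows "(\<Sum>h\<in>cube m. exp (a + (\<Sum>i<m. h i * x i))) = exp a * (\<Prod>i<m. 1 + exp (x i))"
proof -
  have "(\<Prod>i<m. 1 + exp (x i)) = (\<Prod>i<m. \<Sum>b\<in>{0,1::real}. exp (b * x i))"
    by simp
  also have "\<dots> = (\<Sum>h\<in>cube m. \<Prod>i<m. exp (h i * x i))"
    unfolding cube_def by (rule prod_sum_PiE) auto
  also have "\<dots> = (\<Sum>h\<in>cube m. exp (\<Sum>i<m. h i * x i))"
    by (simp add: exp_sum)
  finally show ?thesis
    by (simp add: exp_add sum_distrib_left)
qed

lemma rbm_marginal_eq_product: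
  "rbm_marginal n m W B C v =
    exp (\<Sum>l<n. B l * v l) * (\<Prod>i<m. 1 + exp (C i + (\<Sum>l<n. W i l * v l))) /
    (\<Sum>u\<in>cube n. exp (\<Sum>l<n. B l * u l) * (\<Prod>i<m. 1 + exp (C i + (\<Sum>l<n. W i l * u l))))"
proof -
  have "(\<Sum>h\<in>cube m. exp (rbm_energy n m W B C u h)) =
     exp (\<Sum>l<n. B l * u l) * (\<Prod>i<m. 1 + exp (C i + (\<Sum>l<n. W i l * u l)))" for u
  proof -
    have "rbm_energy n m W B C u h =
        (\<Sum>l<n. B l * u l) + (\<Sum>i<m. h i * (C i + (\<Sum>l<n. W i l * u l)))" for h
      unfolding rbm_energy_def
      by (simp add: sum_distrib_left algebra_simps sum.distrib mult.assoc)
    then show ?thesis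
      using sum_cube_exp_linear by simp
  qed
  then show ?thesis
    unfolding rbm_marginal_def rbm_Z_def by simp
qed

lemma rbm_marginal_affine:
  fixes n m :: nat and c :: "nat \<Rightarrow> real" and a :: "nat \<Rightarrow> nat \<Rightarrow> real"
  defines "A \<equiv> \<lambda>i u. c i + (\<Sum>l<n. a i l * u l)"
  defines "U \<equiv> \<lambda>u. exp (A 0 u) * (\<Prod>i<m. 1 + exp (A (Suc i) u - A 0 u))"
  shows "rbm_marginal n m (\<lambda>i l. a (Suc i) l - a 0 l) (a 0) (\<lambda>i. c (Suc i) - c 0) v =
    U v / (\<Sum>u\<in>cube n. U u)"
proof -
  have U: "exp (\<Sum>l<n. a 0 l * u l) *
      (\<Prod>i<m. 1 + exp (c (Suc i) - c 0 + (\<Sum>l<n. (a (Suc i) l - a 0 l) * u l)))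
    = exp (- c 0) * U u" for u
    unfolding U_def A_def
    by (simp add: exp_add[symmetric] left_diff_distrib sum_subtractf algebra_simps)
  show ?thesis
    unfolding rbm_marginal_eq_product U sum_distrib_left[symmetric] by simp
qed

lemma exp_affine_tendsto_0:
  fixes a c :: real
  assumes "a < 0"
  shows "((\<lambda>t. exp (t * a + c)) \<longlongrightarrow> 0) at_top"
proof -
  have "filterlim (\<lambda>t::real. t * a + c) at_bot at_top"
    using assms by real_asymp
  then show ?thesis
    by (rule filterlim_compose[OF exp_at_bot])
qed

text \<open>If the terms exp (x i) have at most one non-vanishing limit, the product expands
  asymptotically to the sum of the exp (x i).\<close>
lemma tendsto_exp_mult_prod_one_plus_exp:
  fixes x :: "nat \<Rightarrow> 'a \<Rightarrow> real"
  assumes "s \<le> m"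
    and lim_s: "((\<lambda>t. exp (x s t)) \<longlongrightarrow> L) F"
    and lim_other: "\<And>i. i \<le> m \<Longrightarrow> i \<noteq> s \<Longrightarrow> ((\<lambda>t. exp (x i t)) \<longlongrightarrow> 0) F"
    and lim_diff: "\<And>i. 0 < i \<Longrightarrow> i \<le> m \<Longrightarrow> i \<noteq> s \<Longrightarrow>
      ((\<lambda>t. exp (x i t - x 0 t)) \<longlongrightarrow> 0) F"
  shows "((\<lambda>t. exp (x 0 t) * (\<Prod>i<m. 1 + exp (x (Suc i) t - x 0 t))) \<longlongrightarrow> L) F"
proof -
  have prod_lim: "((\<lambda>t. \<Prod>i\<in>I. 1 + exp (x (Suc i) t - x 0 t)) \<longlongrightarrow> 1) F"
    if "I \<subseteq> {..<m}" "Suc ` I \<inter> {s} = {}" for I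
  proof -
    have "((\<lambda>t. \<Prod>i\<in>I. 1 + exp (x (Suc i) t - x 0 t)) \<longlongrightarrow> (\<Prod>i\<in>I. 1 + 0)) F"
      using that by (intro tendsto_prod tendsto_add tendsto_const lim_diff) auto
    then show ?thesis by simp
  qed
  show ?thesis
  proof (cases s)
    case 0
    show ?thesis
      using tendsto_mult[OF lim_s[unfolded 0] prod_lim[of "{..<m}"]] 0 by auto
  next
    case (Suc r)
    have r: "r \<in> {..<m}"
      using Suc \<open>s \<le> m\<close> by simp
    have "exp (x 0 t) * (\<Prod>i<m. 1 + exp (x (Suc i) t - x 0 t)) =
        (exp (x 0 t) + exp (x s t)) * (\<Prod>i\<in>{..<m}-{r}. 1 + exp (x (Suc i) t - x 0 t))" for t
      using r by (simp add: prod.remove[of _ r] Suc distrib_left exp_diff)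
    moreover have "((\<lambda>t. exp (x 0 t) + exp (x s t)) \<longlongrightarrow> 0 + L) F"
      using Suc by (intro tendsto_add lim_s lim_other) auto
    ultimately show ?thesis
      using tendsto_mult[OF _ prod_lim[of "{..<m}-{r}"]] Suc by auto
  qed
qed

lemma KL_normalized_tendsto_0:
  assumes dist: "is_distribution n p"
    and lim: "\<And>v. v \<in> cube n \<Longrightarrow> ((\<lambda>t. U t v) \<longlongrightarrow> p v) F"
  shows "((\<lambda>t. KL n p (\<lambda>v. U t v / (\<Sum>u\<in>cube n. U t u))) \<longlongrightarrow> 0) F"
proof -
  have "((\<lambda>t. \<Sum>u\<in>cube n. U t u) \<longlongrightarrow> (\<Sum>u\<in>cube n. p u)) F"
    by (intro tendsto_sum lim)
  then have Z: "((\<lambda>t. \<Sum>u\<in>cube n. U t u) \<longlongrightarrow> 1) F"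
    using dist unfolding is_distribution_def by simp
  have "((\<lambda>t. KL n p (\<lambda>v. U t v / (\<Sum>u\<in>cube n. U t u))) \<longlongrightarrow> (\<Sum>v\<in>cube n. 0)) F"
    unfolding KL_def
  proof (intro tendsto_sum)
    fix v assume v: "v \<in> cube n"
    show "((\<lambda>t. if p v = 0 then 0 else p v * ln (p v / (U t v / (\<Sum>u\<in>cube n. U t u))))
        \<longlongrightarrow> 0) F"
    proof (cases "p v = 0")
      case False
      have "((\<lambda>t. p v * ln (p v / (U t v / (\<Sum>u\<in>cube n. U t u))))
          \<longlongrightarrow> p v * ln (p v / (p v / 1))) F"
        using False by (intro tendsto_intros lim v Z) auto
      then show ?thesis
        using False by simp
    qed simp
  qed
  then show ?thesis
    by simp
qed

lemma cube_binary: "v \<in> cube n \<Longrightarrow> l < n \<Longrightarrow> v l = 0 \<or> v l = 1"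
  unfolding cube_def by auto

lemma supp_nonempty: "is_distribution n p \<Longrightarrow> supp n p \<noteq> {}"
  unfolding is_distribution_def supp_def
  by (metis (mono_tags, lifting) empty_Collect_eq order_less_le sum.neutral zero_neq_one)

text \<open>Edge i is the pair of w i and w i with coordinate j i flipped.\<close>
locale edge_cover =
  fixes n :: nat and p :: "(nat \<Rightarrow> real) \<Rightarrow> real" and k :: nat
    and w :: "nat \<Rightarrow> nat \<Rightarrow> real" and j :: "nat \<Rightarrow> nat"
  assumes distribution: "is_distribution n p"
    and k_pos: "0 < k"
    and edges: "\<And>i. i < k \<Longrightarrow> w i \<in> cube n \<and> j i < n"
    and covers: "\<And>v. v \<in> supp n p \<Longrightarrow> \<exists>i<k. \<forall>l<n. l \<noteq> j i \<longrightarrow> v l = w i l"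
begin

definition on_edge :: "nat \<Rightarrow> (nat \<Rightarrow> real) \<Rightarrow> bool" where
  "on_edge i v \<longleftrightarrow> (\<forall>l<n. l \<noteq> j i \<longrightarrow> v l = w i l)"

definition edge_of :: "(nat \<Rightarrow> real) \<Rightarrow> nat" where
  "edge_of v = (LEAST i. i < k \<and> on_edge i v)"

text \<open>Away from its own points, exp (potential i t v) decays like exp (- t * scale i) or faster,
  and edge 0 at most like exp (- t * n); so the other edges become negligible relative to edge 0.\<close>
definition scale :: "nat \<Rightarrow> real" where
  "scale i = (if i = 0 then 1 else real n + 1)"

text \<open>A support point lying on several edges is charged only to the edge it is assigned to,
  so that the contributions of the edges add up to p.\<close>
definition weight :: "nat \<Rightarrow> real \<Rightarrow> real" where
  "weight i b = (if edge_of ((w i)(j i := b)) = i then p ((w i)(j i := b)) else 0)"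

definition log_weight :: "nat \<Rightarrow> real \<Rightarrow> real \<Rightarrow> real" where
  "log_weight i t b = (if 0 < weight i b then ln (weight i b) else - scale i * t)"

definition mismatches :: "nat \<Rightarrow> (nat \<Rightarrow> real) \<Rightarrow> real" where
  "mismatches i v = (\<Sum>l\<in>{..<n}-{j i}. if v l = w i l then 0 else 1)"

definition pot_const :: "nat \<Rightarrow> real \<Rightarrow> real" where
  "pot_const i t = log_weight i t 0 - t * scale i * (\<Sum>l\<in>{..<n}-{j i}. w i l)"

definition pot_coeff :: "nat \<Rightarrow> real \<Rightarrow> nat \<Rightarrow> real" where
  "pot_coeff i t l =
    (if l = j i then log_weight i t 1 - log_weight i t 0 else - t * scale i * (1 - 2 * w i l))"

definition potential :: "nat \<Rightarrow> real \<Rightarrow> (nat \<Rightarrow> real) \<Rightarrow> real" where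
  "potential i t v = pot_const i t + (\<Sum>l<n. pot_coeff i t l * v l)"

definition slope :: "nat \<Rightarrow> (nat \<Rightarrow> real) \<Rightarrow> real" where
  "slope i v = - scale i * mismatches i v - (if 0 < weight i (v (j i)) then 0 else scale i)"

definition offset :: "nat \<Rightarrow> (nat \<Rightarrow> real) \<Rightarrow> real" where
  "offset i v = (if 0 < weight i (v (j i)) then ln (weight i (v (j i))) else 0)"

lemma potential_eq:
  assumes v: "v \<in> cube n" and i: "i < k"
  shows "potential i t v = log_weight i t (v (j i)) - t * scale i * mismatches i v"
proof -
  have ji: "j i < n" and wi: "w i \<in> cube n"
    using edges[OF i] by auto
  have "(\<Sum>l<n. pot_coeff i t l * v l) =
      pot_coeff i t (j i) * v (j i) + (\<Sum>l\<in>{..<n}-{j i}. pot_coeff i t l * v l)"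
    using ji by (subst sum.remove[of _ "j i"]) auto
  also have "(\<Sum>l\<in>{..<n}-{j i}. pot_coeff i t l * v l) =
      - t * scale i * (\<Sum>l\<in>{..<n}-{j i}. (1 - 2 * w i l) * v l)"
    by (simp add: pot_coeff_def sum_distrib_left mult.assoc)
  finally have linear: "(\<Sum>l<n. pot_coeff i t l * v l) =
      (log_weight i t 1 - log_weight i t 0) * v (j i)
      - t * scale i * (\<Sum>l\<in>{..<n}-{j i}. (1 - 2 * w i l) * v l)"
    by (simp add: pot_coeff_def)
  have mismatches: "(\<Sum>l\<in>{..<n}-{j i}. w i l) + (\<Sum>l\<in>{..<n}-{j i}. (1 - 2 * w i l) * v l) =
      mismatches i v"
    unfolding mismatches_def sum.distrib[symmetric]
  proof (rule sum.cong)
    fix l assume "l \<in> {..<n} - {j i}"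
    then have "l < n" by auto
    then show "w i l + (1 - 2 * w i l) * v l = (if v l = w i l then 0 else 1)"
      using cube_binary[OF v] cube_binary[OF wi] by fastforce
  qed simp
  have log_weight: "log_weight i t 0 + (log_weight i t 1 - log_weight i t 0) * v (j i) =
      log_weight i t (v (j i))"
    using cube_binary[OF v ji] by auto
  show ?thesis
    unfolding potential_def pot_const_def linear mismatches[symmetric] log_weight[symmetric]
    by (simp add: algebra_simps)
qed

lemma potential_affine_in_t:
  "v \<in> cube n \<Longrightarrow> i < k \<Longrightarrow> potential i t v = t * slope i v + offset i v"
  unfolding potential_eq slope_def offset_def log_weight_def by (auto simp: algebra_simps)

lemma edge_of_supp:
  assumes "v \<in> supp n p"
  shows "edge_of v < k \<and> on_edge (edge_of v) v"
proof -
  obtain i where "i < k \<and> on_edge i v"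
    using covers[OF assms] unfolding on_edge_def by blast
  then show ?thesis
    unfolding edge_of_def by (rule LeastI)
qed

lemma on_edge_eq_upd:
  assumes v: "v \<in> cube n" and i: "i < k" and "on_edge i v"
  shows "(w i)(j i := v (j i)) = v"
proof
  fix l
  have "w i \<in> cube n" "j i < n"
    using edges[OF i] by auto
  then show "((w i)(j i := v (j i))) l = v l"
    using v \<open>on_edge i v\<close> unfolding on_edge_def cube_def
    by (cases "l < n") (auto simp: PiE_def extensional_def)
qed

lemma weight_on_edge:
  "v \<in> cube n \<Longrightarrow> i < k \<Longrightarrow> on_edge i v \<Longrightarrow> weight i (v (j i)) = (if edge_of v = i then p v else 0)"
  unfolding weight_def on_edge_eq_upd by simp

lemma mismatches_on_edge: "on_edge i v \<Longrightarrow> mismatches i v = 0"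
  unfolding mismatches_def on_edge_def by (intro sum.neutral) auto

lemma mismatches_off_edge:
  assumes "\<not> on_edge i v"
  shows "1 \<le> mismatches i v"
proof -
  obtain l where l: "l \<in> {..<n}-{j i}" "v l \<noteq> w i l"
    using assms unfolding on_edge_def by blast
  have "(if v l = w i l then 0 else 1::real) \<le> mismatches i v"
    unfolding mismatches_def by (rule member_le_sum) (use l in auto)
  with l show ?thesis by simp
qed

lemma mismatches_le: "i < k \<Longrightarrow> mismatches i v \<le> real n - 1"
proof -
  assume "i < k"
  then have ji: "j i < n"
    using edges by blast
  have "mismatches i v \<le> of_nat (card ({..<n}-{j i})) * 1"
    unfolding mismatches_def by (rule sum_bounded_above) auto
  with ji show ?thesis
    by simp
qed

lemma p_nonneg: "v \<in> cube n \<Longrightarrow> 0 \<le> p v"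
  using distribution unfolding is_distribution_def by blast

lemma slope_offset_assigned:
  assumes "v \<in> supp n p" "edge_of v = i"
  shows "slope i v = 0 \<and> offset i v = ln (p v)"
proof -
  have v: "v \<in> cube n" "0 < p v"
    using assms unfolding supp_def by auto
  have "i < k" "on_edge i v"
    using edge_of_supp[OF assms(1)] assms(2) by auto
  then show ?thesis
    using weight_on_edge[OF v(1)] mismatches_on_edge assms(2) v(2)
    unfolding slope_def offset_def by simp
qed

lemma slope_unassigned:
  assumes v: "v \<in> cube n" and i: "i < k" and unassigned: "\<not> (v \<in> supp n p \<and> edge_of v = i)"
  shows "slope i v \<le> - scale i"
proof (cases "0 < weight i (v (j i))")
  case True
  then have "\<not> on_edge i v"
    using weight_on_edge[OF v i] unassigned v unfolding supp_def by (auto split: if_splits)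
  then have "scale i * 1 \<le> scale i * mismatches i v"
    using mismatches_off_edge scale_def by (intro mult_left_mono) auto
  then show ?thesis
    using True unfolding slope_def by simp
next
  case False
  have "0 \<le> scale i * mismatches i v"
    unfolding scale_def mismatches_def by (intro mult_nonneg_nonneg sum_nonneg) auto
  then show ?thesis
    using False unfolding slope_def by simp
qed

lemma slope_0_ge: "- real n \<le> slope 0 v"
  using mismatches_le[OF k_pos, of v] unfolding slope_def scale_def by auto

lemma tendsto_exp_potential_assigned:
  assumes "v \<in> supp n p" "edge_of v = i"
  shows "((\<lambda>t. exp (potential i t v)) \<longlongrightarrow> p v) at_top"
proof -
  have "v \<in> cube n" "0 < p v" "i < k"
    using assms edge_of_supp unfolding supp_def by auto
  then show ?thesis
    using potential_affine_in_t slope_offset_assigned[OF assms] by simp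
qed

lemma tendsto_exp_potential_unassigned:
  assumes "v \<in> cube n" "i < k" "\<not> (v \<in> supp n p \<and> edge_of v = i)"
  shows "((\<lambda>t. exp (potential i t v)) \<longlongrightarrow> 0) at_top"
proof -
  have "slope i v < 0"
    using slope_unassigned[OF assms] scale_def by (smt (verit) of_nat_0_le_iff)
  then show ?thesis
    using potential_affine_in_t[OF assms(1,2)] exp_affine_tendsto_0 by simp
qed

lemma tendsto_exp_potential_ratio:
  assumes v: "v \<in> cube n" and "0 < i" "i < k" "\<not> (v \<in> supp n p \<and> edge_of v = i)"
  shows "((\<lambda>t. exp (potential i t v - potential 0 t v)) \<longlongrightarrow> 0) at_top"
proof -
  have "slope i v - slope 0 v < 0"
    using slope_unassigned[OF v assms(3,4)] slope_0_ge[of v] \<open>0 < i\<close>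
    unfolding scale_def by simp
  then have "((\<lambda>t. exp (t * (slope i v - slope 0 v) + (offset i v - offset 0 v))) \<longlongrightarrow> 0) at_top"
    by (rule exp_affine_tendsto_0)
  then show ?thesis
    using potential_affine_in_t[OF v] assms k_pos by (simp add: algebra_simps)
qed

lemma tendsto_unnormalized_marginal:
  assumes v: "v \<in> cube n"
  shows "((\<lambda>t. exp (potential 0 t v) *
      (\<Prod>i<k-1. 1 + exp (potential (Suc i) t v - potential 0 t v))) \<longlongrightarrow> p v) at_top"
proof -
  define s where "s = (if v \<in> supp n p then edge_of v else 0)"
  have "s \<le> k - 1"
    using edge_of_supp k_pos unfolding s_def by force
  moreover have "((\<lambda>t. exp (potential s t v)) \<longlongrightarrow> p v) at_top"
  proof (cases "v \<in> supp n p")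
    case True
    then show ?thesis
      using tendsto_exp_potential_assigned s_def by simp
  next
    case False
    then have "p v = 0"
      using p_nonneg[OF v] v unfolding supp_def by force
    then show ?thesis
      using tendsto_exp_potential_unassigned[OF v k_pos] False s_def by simp
  qed
  moreover have "v \<in> supp n p \<and> edge_of v = i \<Longrightarrow> i = s" for i
    unfolding s_def by simp
  ultimately show ?thesis
    using k_pos
    by (intro tendsto_exp_mult_prod_one_plus_exp[where s = s])
      (auto intro: tendsto_exp_potential_unassigned[OF v] tendsto_exp_potential_ratio[OF v])
qed

lemma KL_tendsto_0:
  "((\<lambda>t. KL n p (rbm_marginal n (k - 1) (\<lambda>i l. pot_coeff (Suc i) t l - pot_coeff 0 t l)
      (pot_coeff 0 t) (\<lambda>i. pot_const (Suc i) t - pot_const 0 t))) \<longlongrightarrow> 0) at_top"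
proof -
  define U where "U t v = exp (potential 0 t v) *
      (\<Prod>i<k-1. 1 + exp (potential (Suc i) t v - potential 0 t v))" for t v
  have "rbm_marginal n (k - 1) (\<lambda>i l. pot_coeff (Suc i) t l - pot_coeff 0 t l)
      (pot_coeff 0 t) (\<lambda>i. pot_const (Suc i) t - pot_const 0 t) =
      (\<lambda>v. U t v / (\<Sum>u\<in>cube n. U t u))" for t
    unfolding U_def potential_def by (rule ext) (rule rbm_marginal_affine)
  moreover have "((\<lambda>t. KL n p (\<lambda>v. U t v / (\<Sum>u\<in>cube n. U t u))) \<longlongrightarrow> 0) at_top"
    unfolding U_def
    by (intro KL_normalized_tendsto_0 distribution tendsto_unnormalized_marginal)
  ultimately show ?thesis
    by simp
qed

end

lemma edge_pair_obtain:
  assumes "edge_pair n P"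
  obtains u j where "u \<in> cube n" "j < n" "\<forall>v\<in>P. \<forall>l<n. l \<noteq> j \<longrightarrow> v l = u l"
proof -
  obtain u u' where uu: "u \<in> cube n" "P = {u, u'}"
    and differ_once: "card {l\<in>{..<n}. u l \<noteq> u' l} = 1"
    using assms unfolding edge_pair_def by blast
  obtain j where j: "{l\<in>{..<n}. u l \<noteq> u' l} = {j}"
    using differ_once by (rule card_1_singletonE)
  have "j \<in> {l\<in>{..<n}. u l \<noteq> u' l}"
    using j by simp
  then have "j < n"
    by simp
  moreover have "u' l = u l" if "l < n" "l \<noteq> j" for l
  proof (rule ccontr)
    assume "u' l \<noteq> u l"
    with \<open>l < n\<close> have "l \<in> {l\<in>{..<n}. u l \<noteq> u' l}"
      by auto
    then have "l \<in> {j}"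
      unfolding j .
    with \<open>l \<noteq> j\<close> show False
      by simp
  qed
  ultimately show ?thesis
    by (intro that[of u j]) (auto simp: uu)
qed

lemma edge_pair_flip_0:
  assumes "1 \<le> n" and v: "v \<in> cube n"
  shows "edge_pair n {v, v(0 := 1 - v 0)}"
proof -
  have "v 0 = 0 \<or> v 0 = 1"
    using cube_binary[OF v] assms(1) by simp
  moreover have "v(0 := 1 - v 0) \<in> cube n"
    using v assms(1) calculation unfolding cube_def by (auto simp: PiE_iff extensional_def)
  moreover have "{l\<in>{..<n}. v l \<noteq> (v(0 := 1 - v 0)) l} = {0}"
    using assms(1) calculation(1) by auto
  ultimately show ?thesis
    unfolding edge_pair_def using v by (intro exI[of _ v] exI[of _ "v(0 := 1 - v 0)"]) simp
qed

lemma min_pair_cover_obtain: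
  assumes "1 \<le> n" and "S \<subseteq> cube n"
  obtains F where "finite F" "card F = min_pair_cover n S"
    "\<forall>P\<in>F. edge_pair n P" "S \<subseteq> \<Union>F"
proof -
  define F where "F = (\<lambda>v. {v, v(0 := 1 - v 0)}) ` S"
  have "finite (cube n)"
    unfolding cube_def by (intro finite_PiE) auto
  then have "finite F"
    unfolding F_def using assms(2) finite_subset by blast
  moreover have "\<forall>P\<in>F. edge_pair n P"
    unfolding F_def using edge_pair_flip_0[OF assms(1)] assms(2) by blast
  moreover have "S \<subseteq> \<Union>F"
    unfolding F_def by blast
  ultimately have "\<exists>k F. finite F \<and> card F = k \<and> (\<forall>P\<in>F. edge_pair n P) \<and> S \<subseteq> \<Union>F"
    by blast
  then have "\<exists>F. finite F \<and> card F = min_pair_cover n S \<and> (\<forall>P\<in>F. edge_pair n P) \<and> S \<subseteq> \<Union>F"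
    unfolding min_pair_cover_def by (rule LeastI_ex)
  with that show ?thesis
    by blast
qed

lemma edge_cover_from_pair_cover:
  assumes dist: "is_distribution n p" and F: "finite F" "card F = k"
    "\<forall>P\<in>F. edge_pair n P" "supp n p \<subseteq> \<Union>F"
  obtains w j where "edge_cover n p k w j"
proof -
  obtain f where f: "bij_betw f {..<k} F"
    using ex_bij_betw_nat_finite[OF F(1)] F(2) atLeast0LessThan by metis
  have "\<forall>i\<in>{..<k}. \<exists>uj. fst uj \<in> cube n \<and> snd uj < n \<and>
      (\<forall>v\<in>f i. \<forall>l<n. l \<noteq> snd uj \<longrightarrow> v l = fst uj l)"
  proof
    fix i assume "i \<in> {..<k}"
    then have "edge_pair n (f i)"
      using f F(3) bij_betwE by blast
    then obtain u j where "u \<in> cube n" "j < n" "\<forall>v\<in>f i. \<forall>l<n. l \<noteq> j \<longrightarrow> v l = u l"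
      by (rule edge_pair_obtain)
    then show "\<exists>uj. fst uj \<in> cube n \<and> snd uj < n \<and>
        (\<forall>v\<in>f i. \<forall>l<n. l \<noteq> snd uj \<longrightarrow> v l = fst uj l)"
      by (intro exI[of _ "(u, j)"]) simp
  qed
  from bchoice[OF this] obtain g where g: "\<forall>i\<in>{..<k}. fst (g i) \<in> cube n \<and> snd (g i) < n \<and>
      (\<forall>v\<in>f i. \<forall>l<n. l \<noteq> snd (g i) \<longrightarrow> v l = fst (g i) l)"
    ..
  have "0 < k"
    using supp_nonempty[OF dist] F(1,2,4) by auto
  show ?thesis
  proof (rule that[of "\<lambda>i. fst (g i)" "\<lambda>i. snd (g i)"], unfold_locales)
    fix v assume "v \<in> supp n p"
    then obtain P where "P \<in> F" "v \<in> P"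
      using F(4) by blast
    then obtain i where "i < k" "f i = P"
      using f by (auto simp: bij_betw_def)
    then show "\<exists>i<k. \<forall>l<n. l \<noteq> snd (g i) \<longrightarrow> v l = fst (g i) l"
      using g \<open>v \<in> P\<close> by auto
  qed (use dist g \<open>0 < k\<close> in auto)
qed

lemma rbm_approximates_pair_cover:
  assumes "is_distribution n p" "finite F" "card F = k"
    "\<forall>P\<in>F. edge_pair n P" "supp n p \<subseteq> \<Union>F"
    and "0 < \<epsilon>"
  shows "\<exists>W B C. KL n p (rbm_marginal n (k - 1) W B C) < \<epsilon>"
proof -
  obtain w j where "edge_cover n p k w j"
    using edge_cover_from_pair_cover[OF assms(1-5)] .
  then interpret edge_cover n p k w j .
  obtain T where "\<forall>t\<ge>T. KL n p (rbm_marginal n (k - 1)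
      (\<lambda>i l. pot_coeff (Suc i) t l - pot_coeff 0 t l) (pot_coeff 0 t)
      (\<lambda>i. pot_const (Suc i) t - pot_const 0 t)) < \<epsilon>"
    using order_tendstoD(2)[OF KL_tendsto_0 \<open>0 < \<epsilon>\<close>] unfolding eventually_at_top_linorder by blast
  then show ?thesis
    by blast
qed

theorem theorem1:
  fixes n :: nat and p :: "(nat \<Rightarrow> real) \<Rightarrow> real"
  assumes "n \<ge> 1"
    and "is_distribution n p"
  shows "\<forall>\<epsilon>>0. \<exists>W B C.
           KL n p (rbm_marginal n (min_pair_cover n (supp n p) - 1) W B C) < \<epsilon>"
proof -
  have "supp n p \<subseteq> cube n"
    unfolding supp_def by blast
  then obtain F where "finite F" "card F = min_pair_cover n (supp n p)"
    "\<forall>P\<in>F. edge_pair n P" "supp n p \<subseteq> \<Union>F"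
    by (rule min_pair_cover_obtain[OF assms(1)])
  then show ?thesis
    using rbm_approximates_pair_cover[OF assms(2)] by blast
qed

end
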